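(* For $x\in\mathbb{R}^d\setminus\{0\}$ (for every $d$), $0\le a<b\le1$ and $r>0$, $$\lim_{d\to+\infty}\frac1d\ln\left(\frac{|B(x,r,a,b)|}{v_d}\right)=\ln\big(r\sqrt{1-a^2}\big).$$
   Context: $v_d$ is the volume of the unit Euclidean ball of $\mathbb{R}^d$ and $|\cdot|$ is Lebesgue measure. For $x\in\mathbb{R}^d\setminus\{0\}$, $0\le a<b\le1$ and $r>0$: if $a>0$, $B(x,r,a,b)=\{y\in\mathbb{R}^d:\|y-x\|\le r,\ ar<\langle y-x,x/\|x\|\rangle\le br\}$; if $a=0$, $B(x,r,a,b)=\{y\in\mathbb{R}^d:\|y-x\|\le r,\ \langle y-x,x/\|x\|\rangle\le br\}$. *)

theory Defs
  imports "HOL-Analysis.Analysis"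
begin

text \<open>R^d is modelled as the extensional functions {..<d} -> real, with Lebesgue measure
  given by the product measure of d copies of lborel.\<close>

definition Rsp :: "nat \<Rightarrow> (nat \<Rightarrow> real) measure" where
  "Rsp d = PiM {..<d} (\<lambda>_. lborel)"

definition ipd :: "nat \<Rightarrow> (nat \<Rightarrow> real) \<Rightarrow> (nat \<Rightarrow> real) \<Rightarrow> real" where
  "ipd d x y = (\<Sum>i<d. x i * y i)"

definition nrmd :: "nat \<Rightarrow> (nat \<Rightarrow> real) \<Rightarrow> real" where
  "nrmd d x = sqrt (\<Sum>i<d. (x i)\<^sup>2)"

definition vball :: "nat \<Rightarrow> real" where
  "vball d = measure (Rsp d) {y \<in> space (Rsp d). nrmd d y \<le> 1}"

definition Bset :: "nat \<Rightarrow> (nat \<Rightarrow> real) \<Rightarrow> real \<Rightarrow> real \<Rightarrow> real \<Rightarrow> (nat \<Rightarrow> real) set" where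
  "Bset d x r a b = {y \<in> space (Rsp d).
      nrmd d (\<lambda>i. y i - x i) \<le> r \<and>
      (a > 0 \<longrightarrow> a * r < ipd d (\<lambda>i. y i - x i) x / nrmd d x) \<and>
      ipd d (\<lambda>i. y i - x i) x / nrmd d x \<le> b * r}"

end

theory Submission
  imports Defs
begin

(* Write u = x/|x| and R = r sqrt(1 - a^2). Every point of B(x,r,a,b) lies within distance R
   of x + a r u, so |B| <= v_d R^d. Conversely, for \<rho> < R and small \<delta> > 0, a point of the ball
   of radius \<rho> about x + (a r + \<delta>) u whose offset along u is at most \<delta> in absolute value lies
   in B, and every other point of that ball lies in the ball of radius sqrt(\<rho>^2 - \<delta>^2) < \<rho>
   about x + a r u or about x + (a r + 2\<delta>) u. These two balls are exponentially negligible
   against v_d \<rho>^d, so |B|/v_d lies between \<rho>^d/2 and R^d for large d. *)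

definition cball_Rsp :: "nat \<Rightarrow> (nat \<Rightarrow> real) \<Rightarrow> real \<Rightarrow> (nat \<Rightarrow> real) set" where
  "cball_Rsp d c \<rho> = {y \<in> space (Rsp d). nrmd d (\<lambda>i. y i - c i) \<le> \<rho>}"

definition ray :: "nat \<Rightarrow> (nat \<Rightarrow> real) \<Rightarrow> real \<Rightarrow> nat \<Rightarrow> real" where
  "ray d x t = (\<lambda>i. x i + t * (x i / nrmd d x))"

lemma nrmd_translate_measurable [measurable]:
  "(\<lambda>y. nrmd d (\<lambda>i. y i - c i)) \<in> borel_measurable (Rsp d)"
  unfolding nrmd_def Rsp_def by measurable

lemma ipd_translate_measurable [measurable]:
  "(\<lambda>y. ipd d (\<lambda>i. y i - c i) x) \<in> borel_measurable (Rsp d)"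
  unfolding ipd_def Rsp_def by measurable

lemma sets_cball_Rsp [measurable]: "cball_Rsp d c \<rho> \<in> sets (Rsp d)"
  unfolding cball_Rsp_def by measurable

lemma sets_Bset [measurable]: "Bset d x r a b \<in> sets (Rsp d)"
  unfolding Bset_def by measurable

lemma distr_Rsp_translate:
  "distr (Rsp d) (Rsp d) (\<lambda>y. restrict (\<lambda>i. c i + y i) {..<d}) = Rsp d"
proof -
  interpret product_sigma_finite "\<lambda>_::nat. lborel :: real measure" ..
  let ?T = "\<lambda>y. restrict (\<lambda>i. c i + y i) {..<d}"
  have T: "?T \<in> Rsp d \<rightarrow>\<^sub>M Rsp d"
    unfolding Rsp_def by measurable
  show ?thesis unfolding Rsp_def
  proof (rule PiM_eqI)
    fix A :: "nat \<Rightarrow> real set" assume A: "\<And>i. i \<in> {..<d} \<Longrightarrow> A i \<in> sets lborel"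
    let ?P = "Pi\<^sub>M {..<d} (\<lambda>_. lborel :: real measure)"
    have sets_A: "Pi\<^sub>E {..<d} A \<in> sets ?P"
      using A by (auto intro: sets_PiM_I_finite)
    have sets_pre: "(+) (c i) -` A i \<in> sets lborel" if "i < d" for i
      using A that measurable_sets_borel[of "(+) (c i)" borel "A i"] by simp
    have "emeasure (distr ?P ?P ?T) (Pi\<^sub>E {..<d} A) = emeasure ?P (?T -` Pi\<^sub>E {..<d} A \<inter> space ?P)"
      using T sets_A unfolding Rsp_def by (rule emeasure_distr)
    also have "?T -` Pi\<^sub>E {..<d} A \<inter> space ?P = Pi\<^sub>E {..<d} (\<lambda>i. (+) (c i) -` A i)"
      by (auto simp: space_PiM PiE_def Pi_def extensional_def)
    also have "emeasure ?P \<dots> = (\<Prod>i<d. emeasure lborel ((+) (c i) -` A i))"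
      using sets_pre by (subst emeasure_PiM) auto
    also have "\<dots> = (\<Prod>i<d. emeasure lborel (A i))"
    proof (rule prod.cong)
      fix i assume "i \<in> {..<d}"
      then have "emeasure lborel ((+) (c i) -` A i) = emeasure (distr lborel borel ((+) (c i))) (A i)"
        using A by (simp add: emeasure_distr)
      then show "emeasure lborel ((+) (c i) -` A i) = emeasure lborel (A i)"
        by (simp only: lborel_distr_plus)
    qed simp
    finally show "emeasure (distr ?P ?P ?T) (Pi\<^sub>E {..<d} A) = (\<Prod>i<d. emeasure lborel (A i))" .
  qed auto
qed

lemma emeasure_cball_Rsp:
  assumes "\<rho> > 0"
  shows "emeasure (Rsp d) (cball_Rsp d c \<rho>) = ennreal (unit_ball_vol (real d) * \<rho> ^ d)"
proof -
  let ?T = "\<lambda>y. restrict (\<lambda>i. c i + y i) {..<d}"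
  have T: "?T \<in> Rsp d \<rightarrow>\<^sub>M Rsp d"
    unfolding Rsp_def by measurable
  have "emeasure (Rsp d) (cball_Rsp d c \<rho>) = emeasure (distr (Rsp d) (Rsp d) ?T) (cball_Rsp d c \<rho>)"
    by (simp add: distr_Rsp_translate)
  also have "\<dots> = emeasure (Rsp d) (?T -` cball_Rsp d c \<rho> \<inter> space (Rsp d))"
    using T by (simp add: emeasure_distr)
  also have "?T -` cball_Rsp d c \<rho> \<inter> space (Rsp d)
      = {f. sqrt (\<Sum>i\<in>{..<d}. (f i)\<^sup>2) \<le> \<rho>} \<inter> space (Pi\<^sub>M {..<d} (\<lambda>_. lborel))"
    using measurable_space[OF T] by (auto simp: cball_Rsp_def nrmd_def Rsp_def space_PiM)
  also have "emeasure (Rsp d) \<dots> = ennreal (unit_ball_vol (real d) * \<rho> ^ d)"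
    unfolding Rsp_def using assms by (subst emeasure_cball_aux) auto
  finally show ?thesis .
qed

lemma fmeasurable_cball_Rsp: "\<rho> > 0 \<Longrightarrow> cball_Rsp d c \<rho> \<in> fmeasurable (Rsp d)"
  by (rule fmeasurableI) (auto simp: emeasure_cball_Rsp)

lemma vball_eq_unit_ball_vol: "vball d = unit_ball_vol (real d)"
proof -
  have "vball d = measure (Rsp d) (cball_Rsp d (\<lambda>_. 0) 1)"
    by (simp add: vball_def cball_Rsp_def)
  then show ?thesis
    by (simp add: measure_def emeasure_cball_Rsp)
qed

lemma vball_pos: "vball d > 0"
  by (simp add: vball_eq_unit_ball_vol)

lemma measure_cball_Rsp: "\<rho> > 0 \<Longrightarrow> measure (Rsp d) (cball_Rsp d c \<rho>) = vball d * \<rho> ^ d"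
  by (simp add: measure_def emeasure_cball_Rsp vball_eq_unit_ball_vol)

lemma nrmd_le_iff: "\<rho> \<ge> 0 \<Longrightarrow> nrmd d w \<le> \<rho> \<longleftrightarrow> (\<Sum>i<d. (w i)\<^sup>2) \<le> \<rho>\<^sup>2"
  unfolding nrmd_def by (simp add: real_sqrt_le_iff' sum_nonneg)

lemma nrmd_pos: "\<exists>i<d. x i \<noteq> 0 \<Longrightarrow> nrmd d x > 0"
  unfolding nrmd_def by (auto intro!: sum_pos2)

lemma sum_power2_normalize:
  assumes "nrmd d x > 0"
  shows "(\<Sum>i<d. (x i / nrmd d x)\<^sup>2) = 1"
proof -
  have "(\<Sum>i<d. (x i)\<^sup>2) = (nrmd d x)\<^sup>2"
    unfolding nrmd_def by (simp add: sum_nonneg)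
  with assms show ?thesis
    by (simp add: power_divide flip: sum_divide_distrib)
qed

lemma sum_power2_add_scaled:
  fixes w u :: "nat \<Rightarrow> real"
  shows "(\<Sum>i<d. (w i + s * u i)\<^sup>2)
    = (\<Sum>i<d. (w i)\<^sup>2) + 2 * s * (\<Sum>i<d. w i * u i) + s\<^sup>2 * (\<Sum>i<d. (u i)\<^sup>2)"
  by (simp add: power2_eq_square algebra_simps sum.distrib sum_distrib_left)

lemma nrmd_add_scaled_le:
  fixes w u :: "nat \<Rightarrow> real"
  assumes u: "(\<Sum>i<d. (u i)\<^sup>2) = 1" and w: "(\<Sum>i<d. (w i)\<^sup>2) \<le> \<rho>\<^sup>2"
    and s: "s * (\<Sum>i<d. w i * u i) \<le> - s\<^sup>2" and "s\<^sup>2 \<le> \<rho>\<^sup>2"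
  shows "nrmd d (\<lambda>i. w i + s * u i) \<le> sqrt (\<rho>\<^sup>2 - s\<^sup>2)"
proof -
  have "(\<Sum>i<d. (w i + s * u i)\<^sup>2) \<le> \<rho>\<^sup>2 - s\<^sup>2"
    using w s unfolding sum_power2_add_scaled u by simp
  with \<open>s\<^sup>2 \<le> \<rho>\<^sup>2\<close> show ?thesis
    by (simp add: nrmd_le_iff)
qed

lemma mem_Bset_iff:
  "y \<in> Bset d x r a b \<longleftrightarrow> y \<in> space (Rsp d) \<and> nrmd d (\<lambda>i. y i - x i) \<le> r \<and>
    (a > 0 \<longrightarrow> a * r < (\<Sum>i<d. (y i - x i) * (x i / nrmd d x))) \<and>
    (\<Sum>i<d. (y i - x i) * (x i / nrmd d x)) \<le> b * r"
  by (simp add: Bset_def ipd_def sum_divide_distrib)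

lemma Bset_subset_cball_Rsp:
  assumes x: "nrmd d x > 0" and a: "0 \<le> a" "a \<le> 1" and r: "r > 0"
  shows "Bset d x r a b \<subseteq> cball_Rsp d (ray d x (a * r)) (r * sqrt (1 - a\<^sup>2))"
proof
  fix y assume y: "y \<in> Bset d x r a b"
  define u where "u i = x i / nrmd d x" for i
  define z where "z i = y i - x i" for i
  define t where "t = (\<Sum>i<d. z i * u i)"
  have zr: "(\<Sum>i<d. (z i)\<^sup>2) \<le> r\<^sup>2" and at: "a * (a * r) \<le> a * t"
    using y r a by (auto simp: mem_Bset_iff nrmd_le_iff z_def u_def t_def intro: mult_left_mono)
  have "(\<Sum>i<d. (y i - ray d x (a * r) i)\<^sup>2) = (\<Sum>i<d. (z i + (- (a * r)) * u i)\<^sup>2)"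
    by (simp add: ray_def z_def u_def algebra_simps)
  also have "\<dots> = (\<Sum>i<d. (z i)\<^sup>2) - 2 * (a * r) * t + (a * r)\<^sup>2"
    unfolding sum_power2_add_scaled u_def sum_power2_normalize[OF x] t_def by (simp add: u_def)
  also have "\<dots> \<le> r\<^sup>2 * (1 - a\<^sup>2)"
    using zr mult_left_mono[OF at, of r] r by (simp add: power2_eq_square algebra_simps)
  finally have "(\<Sum>i<d. (y i - ray d x (a * r) i)\<^sup>2) \<le> (r * sqrt (1 - a\<^sup>2))\<^sup>2"
    using a by (simp add: power_mult_distrib abs_square_le_1)
  then show "y \<in> cball_Rsp d (ray d x (a * r)) (r * sqrt (1 - a\<^sup>2))"
    using y r a by (simp add: cball_Rsp_def mem_Bset_iff nrmd_le_iff abs_square_le_1)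
qed

lemma cball_Rsp_subset_Bset_Un:
  assumes x: "nrmd d x > 0" and \<delta>: "0 < \<delta>" "\<delta> \<le> \<rho>"
    and c: "0 \<le> c" "a * r \<le> c - \<delta>" "c + \<delta> \<le> b * r"
    and cr: "c\<^sup>2 + 2 * c * \<delta> + \<rho>\<^sup>2 \<le> r\<^sup>2" and r: "r \<ge> 0"
  shows "cball_Rsp d (ray d x c) \<rho> \<subseteq> Bset d x r a b
    \<union> cball_Rsp d (ray d x (c - \<delta>)) (sqrt (\<rho>\<^sup>2 - \<delta>\<^sup>2))
    \<union> cball_Rsp d (ray d x (c + \<delta>)) (sqrt (\<rho>\<^sup>2 - \<delta>\<^sup>2))"
proof
  fix y assume y: "y \<in> cball_Rsp d (ray d x c) \<rho>"
  define u where "u i = x i / nrmd d x" for i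
  define w where "w i = y i - ray d x c i" for i
  define \<tau> where "\<tau> = (\<Sum>i<d. w i * u i)"
  have u: "(\<Sum>i<d. (u i)\<^sup>2) = 1"
    unfolding u_def by (rule sum_power2_normalize[OF x])
  have w: "(\<Sum>i<d. (w i)\<^sup>2) \<le> \<rho>\<^sup>2"
    using y \<delta> by (simp add: cball_Rsp_def w_def nrmd_le_iff)
  have \<delta>\<rho>: "\<delta>\<^sup>2 \<le> \<rho>\<^sup>2"
    using \<delta> by (simp add: power_mono)
  have shift: "y i - ray d x (c + s) i = w i + (- s) * u i" for s i
    by (simp add: w_def u_def ray_def algebra_simps add_divide_distrib)
  consider "\<tau> \<le> - \<delta>" | "\<delta> < \<tau>" | "- \<delta> < \<tau>" "\<tau> \<le> \<delta>"
    by linarith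
  then show "y \<in> Bset d x r a b \<union> cball_Rsp d (ray d x (c - \<delta>)) (sqrt (\<rho>\<^sup>2 - \<delta>\<^sup>2))
    \<union> cball_Rsp d (ray d x (c + \<delta>)) (sqrt (\<rho>\<^sup>2 - \<delta>\<^sup>2))"
  proof cases
    case 1
    have "\<delta> * \<tau> \<le> - \<delta>\<^sup>2"
      using mult_left_mono[OF 1, of \<delta>] \<delta> by (simp add: power2_eq_square)
    then have "nrmd d (\<lambda>i. w i + \<delta> * u i) \<le> sqrt (\<rho>\<^sup>2 - \<delta>\<^sup>2)"
      using nrmd_add_scaled_le[OF u w _ \<delta>\<rho>] by (simp add: \<tau>_def)
    then show ?thesis
      using y shift[where s = "- \<delta>"] by (simp add: cball_Rsp_def)
  next
    case 2
    have "(- \<delta>) * \<tau> \<le> - (- \<delta>)\<^sup>2"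
      using mult_strict_left_mono[OF 2 \<delta>(1)] by (simp add: power2_eq_square)
    then have "nrmd d (\<lambda>i. w i + (- \<delta>) * u i) \<le> sqrt (\<rho>\<^sup>2 - \<delta>\<^sup>2)"
      using nrmd_add_scaled_le[OF u w, of "- \<delta>"] \<delta>\<rho> by (simp add: \<tau>_def)
    then show ?thesis
      using y shift[where s = \<delta>] by (simp add: cball_Rsp_def)
  next
    case 3
    define z where "z = (\<lambda>i. y i - x i)"
    have z: "z i = w i + c * u i" for i
      using shift[where s = "- c"] by (simp add: z_def ray_def)
    have "(\<Sum>i<d. (z i)\<^sup>2) = (\<Sum>i<d. (w i)\<^sup>2) + 2 * c * \<tau> + c\<^sup>2"
      unfolding z sum_power2_add_scaled u \<tau>_def by simp
    also have "\<dots> \<le> r\<^sup>2"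
      using w cr mult_left_mono[OF 3(2) c(1)] by simp
    finally have "nrmd d z \<le> r"
      using r by (simp add: nrmd_le_iff)
    moreover have "(\<Sum>i<d. z i * u i) = \<tau> + c"
      unfolding z \<tau>_def using u
      by (simp add: algebra_simps sum.distrib power2_eq_square flip: sum_distrib_left)
    ultimately show ?thesis
      using y 3 c by (auto simp: mem_Bset_iff cball_Rsp_def z_def u_def)
  qed
qed

lemma fmeasurable_Bset: "r > 0 \<Longrightarrow> Bset d x r a b \<in> fmeasurable (Rsp d)"
  by (rule fmeasurableI2[OF fmeasurable_cball_Rsp[of r d x]]) (auto simp: Bset_def cball_Rsp_def)

lemma measure_Bset_le:
  assumes "nrmd d x > 0" "0 \<le> a" "a < 1" "r > 0"
  shows "measure (Rsp d) (Bset d x r a b) \<le> vball d * (r * sqrt (1 - a\<^sup>2)) ^ d"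
proof -
  have R: "r * sqrt (1 - a\<^sup>2) > 0"
    using assms by (simp add: abs_square_less_1)
  have "measure (Rsp d) (Bset d x r a b)
      \<le> measure (Rsp d) (cball_Rsp d (ray d x (a * r)) (r * sqrt (1 - a\<^sup>2)))"
    using assms by (intro measure_mono_fmeasurable Bset_subset_cball_Rsp fmeasurable_cball_Rsp R) auto
  then show ?thesis
    by (simp add: measure_cball_Rsp[OF R])
qed

lemma measure_Bset_ge:
  assumes x: "nrmd d x > 0" and a: "0 \<le> a" and r: "r > 0"
    and \<delta>: "0 < \<delta>" "\<delta> < \<rho>" "2 * \<delta> \<le> (b - a) * r"
    and shell: "(a * r + \<delta>)\<^sup>2 + 2 * (a * r + \<delta>) * \<delta> + \<rho>\<^sup>2 \<le> r\<^sup>2"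
  shows "vball d * \<rho> ^ d \<le> measure (Rsp d) (Bset d x r a b) + 2 * vball d * sqrt (\<rho>\<^sup>2 - \<delta>\<^sup>2) ^ d"
proof -
  let ?c = "a * r + \<delta>" and ?\<rho>' = "sqrt (\<rho>\<^sup>2 - \<delta>\<^sup>2)"
  let ?B1 = "cball_Rsp d (ray d x (?c - \<delta>)) ?\<rho>'" and ?B2 = "cball_Rsp d (ray d x (?c + \<delta>)) ?\<rho>'"
  have c: "0 \<le> ?c" "a * r \<le> ?c - \<delta>" "?c + \<delta> \<le> b * r"
    using a r \<delta> by (auto simp: algebra_simps)
  have \<rho>: "\<rho> > 0" and \<rho>': "?\<rho>' > 0"
    using \<delta> by (auto simp: power_strict_mono)
  have "vball d * \<rho> ^ d = measure (Rsp d) (cball_Rsp d (ray d x ?c) \<rho>)"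
    by (simp add: measure_cball_Rsp[OF \<rho>])
  also have "\<dots> \<le> measure (Rsp d) (Bset d x r a b \<union> ?B1 \<union> ?B2)"
    using cball_Rsp_subset_Bset_Un[OF x \<delta>(1) _ c shell] \<delta> r
    by (intro measure_mono_fmeasurable fmeasurable.Un fmeasurable_Bset fmeasurable_cball_Rsp \<rho>' r) auto
  also have "\<dots> \<le> measure (Rsp d) (Bset d x r a b) + measure (Rsp d) ?B1 + measure (Rsp d) ?B2"
    by (intro order.trans[OF measure_Un_le] add_right_mono measure_Un_le) auto
  finally show ?thesis
    by (simp add: measure_cball_Rsp[OF \<rho>'])
qed

lemma eventually_half_power_le:
  fixes q :: "nat \<Rightarrow> real"
  assumes \<rho>': "0 \<le> \<rho>'" "\<rho>' < \<rho>" and q: "eventually (\<lambda>n. \<rho> ^ n \<le> q n + C * \<rho>' ^ n) sequentially"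
  shows "eventually (\<lambda>n. \<rho> ^ n / 2 \<le> q n) sequentially"
proof -
  have \<rho>: "\<rho> > 0"
    using \<rho>' by linarith
  have "(\<lambda>n. C * (\<rho>' / \<rho>) ^ n) \<longlonglongrightarrow> C * 0"
    using \<rho>' \<rho> by (intro tendsto_mult_left LIMSEQ_realpow_zero) auto
  then have "eventually (\<lambda>n. C * (\<rho>' / \<rho>) ^ n < 1 / 2) sequentially"
    by (rule order_tendstoD) simp
  with q show ?thesis
  proof eventually_elim
    case (elim n)
    then have "C * \<rho>' ^ n \<le> \<rho> ^ n / 2"
      using \<rho> by (simp add: power_divide field_simps)
    with elim show ?case
      by linarith
  qed
qed

lemma tendsto_ln_div_of_power_bounds:
  fixes q :: "nat \<Rightarrow> real"
  assumes R: "R > 0" and upper: "eventually (\<lambda>n. q n \<le> R ^ n) sequentially"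
    and lower: "\<And>\<rho>. 0 < \<rho> \<Longrightarrow> \<rho> < R \<Longrightarrow> eventually (\<lambda>n. \<rho> ^ n / 2 \<le> q n) sequentially"
  shows "((\<lambda>n. ln (q n) / real n) \<longlongrightarrow> ln R) sequentially"
proof (rule order_tendstoI)
  fix c assume c: "c < ln R"
  define \<rho> where "\<rho> = exp ((c + ln R) / 2)"
  have \<rho>: "0 < \<rho>" "\<rho> < R" "c < ln \<rho>"
    using c R by (auto simp: \<rho>_def exp_less_cancel_iff[of _ "ln R", simplified R exp_ln])
  have "eventually (\<lambda>n. ln 2 / real n < ln \<rho> - c) sequentially"
    using \<rho>(3) by (intro order_tendstoD(2)[OF lim_const_over_n]) simp
  with lower[OF \<rho>(1,2)] eventually_ge_at_top[of 1]
  show "eventually (\<lambda>n. c < ln (q n) / real n) sequentially"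
  proof eventually_elim
    case (elim n)
    have "real n * ln \<rho> - ln 2 = ln (\<rho> ^ n / 2)"
      using \<rho>(1) by (simp add: ln_div ln_realpow)
    also have "\<dots> \<le> ln (q n)"
      using elim(1) \<rho>(1) by (intro ln_mono) auto
    finally have "(real n * ln \<rho> - ln 2) / real n \<le> ln (q n) / real n"
      by (rule divide_right_mono) simp
    moreover have "(real n * ln \<rho> - ln 2) / real n = ln \<rho> - ln 2 / real n"
      using elim(2) by (simp add: diff_divide_distrib)
    ultimately show ?case
      using elim(3) by linarith
  qed
next
  fix c assume c: "ln R < c"
  have "eventually (\<lambda>n. (R / 2) ^ n / 2 \<le> q n) sequentially"
    using R by (intro lower) auto
  with upper eventually_ge_at_top[of 1]
  show "eventually (\<lambda>n. ln (q n) / real n < c) sequentially"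
  proof eventually_elim
    case (elim n)
    moreover have "0 < (R / 2) ^ n / 2"
      using R by simp
    ultimately have "q n > 0"
      by linarith
    with elim(1) have "ln (q n) \<le> real n * ln R"
      using R by (simp add: ln_realpow[symmetric])
    then have "ln (q n) / real n \<le> ln R"
      using elim(2) by (simp add: divide_le_eq mult.commute)
    with c show ?case
      by linarith
  qed
qed

lemma obtain_shell_offset:
  assumes r: "r > 0" and \<rho>: "0 < \<rho>" "\<rho> < r * sqrt (1 - a\<^sup>2)" and \<epsilon>: "\<epsilon> > 0"
  obtains \<delta> where "0 < \<delta>" "\<delta> < \<rho>" "\<delta> \<le> \<epsilon>"
    "(a * r + \<delta>)\<^sup>2 + 2 * (a * r + \<delta>) * \<delta> + \<rho>\<^sup>2 \<le> r\<^sup>2"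
proof -
  have "1 - a\<^sup>2 > 0"
  proof (rule ccontr)
    assume "\<not> 1 - a\<^sup>2 > 0"
    then have "r * sqrt (1 - a\<^sup>2) \<le> 0"
      using r by (simp add: mult_nonneg_nonpos)
    with \<rho> show False
      by linarith
  qed
  then have "\<rho>\<^sup>2 < (r * sqrt (1 - a\<^sup>2))\<^sup>2"
    using \<rho> by (intro power_strict_mono) auto
  also have "\<dots> = r\<^sup>2 - (a * r)\<^sup>2"
    using \<open>1 - a\<^sup>2 > 0\<close> by (simp add: power_mult_distrib algebra_simps)
  finally have lim: "(a * r + 0)\<^sup>2 + 2 * (a * r + 0) * 0 + \<rho>\<^sup>2 < r\<^sup>2"
    by simp
  have "((\<lambda>\<delta>. (a * r + \<delta>)\<^sup>2 + 2 * (a * r + \<delta>) * \<delta> + \<rho>\<^sup>2)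
      \<longlongrightarrow> (a * r + 0)\<^sup>2 + 2 * (a * r + 0) * 0 + \<rho>\<^sup>2) (at_right 0)"
    by (intro tendsto_intros)
  then have "eventually (\<lambda>\<delta>. (a * r + \<delta>)\<^sup>2 + 2 * (a * r + \<delta>) * \<delta> + \<rho>\<^sup>2 < r\<^sup>2) (at_right 0)"
    using lim by (rule order_tendstoD(2))
  moreover have "eventually (\<lambda>\<delta>. \<delta> < min \<rho> \<epsilon>) (at_right (0::real))"
    using \<rho> \<epsilon> by (intro order_tendstoD(2)[OF tendsto_ident_at]) auto
  moreover note eventually_at_right_less[of 0]
  ultimately have "eventually (\<lambda>\<delta>. 0 < \<delta> \<and> \<delta> < min \<rho> \<epsilon>
      \<and> (a * r + \<delta>)\<^sup>2 + 2 * (a * r + \<delta>) * \<delta> + \<rho>\<^sup>2 < r\<^sup>2) (at_right 0)"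
    by eventually_elim blast
  then obtain \<delta> where "0 < \<delta>" "\<delta> < min \<rho> \<epsilon>"
    "(a * r + \<delta>)\<^sup>2 + 2 * (a * r + \<delta>) * \<delta> + \<rho>\<^sup>2 < r\<^sup>2"
    using eventually_happens'[OF trivial_limit_at_right_real] by blast
  then show thesis
    using that[of \<delta>] by simp
qed

theorem lemma2p4:
  fixes x :: "nat \<Rightarrow> nat \<Rightarrow> real" and a b r :: real
  assumes "\<And>d. d \<ge> 1 \<Longrightarrow> \<exists>i<d. x d i \<noteq> 0"
    and "0 \<le> a" and "a < b" and "b \<le> 1" and "r > 0"
  shows "((\<lambda>d. ln (measure (Rsp d) (Bset d (x d) r a b) / vball d) / real d)
           \<longlongrightarrow> ln (r * sqrt (1 - a\<^sup>2))) sequentially"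
proof (rule tendsto_ln_div_of_power_bounds)
  have x: "\<forall>\<^sub>F d in sequentially. nrmd d (x d) > 0"
    using eventually_ge_at_top[of 1] by eventually_elim (use assms(1) nrmd_pos in blast)
  show "r * sqrt (1 - a\<^sup>2) > 0"
    using assms by (simp add: abs_square_less_1)
  show "\<forall>\<^sub>F d in sequentially. measure (Rsp d) (Bset d (x d) r a b) / vball d \<le> (r * sqrt (1 - a\<^sup>2)) ^ d"
    using x by eventually_elim (use assms in \<open>simp add: measure_Bset_le vball_pos pos_divide_le_eq mult.commute\<close>)
  fix \<rho> assume \<rho>: "0 < \<rho>" "\<rho> < r * sqrt (1 - a\<^sup>2)"
  obtain \<delta> where \<delta>: "0 < \<delta>" "\<delta> < \<rho>" "\<delta> \<le> (b - a) * r / 2"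
    and shell: "(a * r + \<delta>)\<^sup>2 + 2 * (a * r + \<delta>) * \<delta> + \<rho>\<^sup>2 \<le> r\<^sup>2"
    using obtain_shell_offset[OF assms(5) \<rho>, of "(b - a) * r / 2"] assms(3,5) by auto
  have "\<forall>\<^sub>F d in sequentially. \<rho> ^ d \<le> measure (Rsp d) (Bset d (x d) r a b) / vball d
      + 2 * sqrt (\<rho>\<^sup>2 - \<delta>\<^sup>2) ^ d"
    using x
  proof eventually_elim
    case (elim d)
    have "vball d * \<rho> ^ d \<le> measure (Rsp d) (Bset d (x d) r a b) + 2 * vball d * sqrt (\<rho>\<^sup>2 - \<delta>\<^sup>2) ^ d"
      using \<delta> by (intro measure_Bset_ge[OF elim assms(2,5) \<delta>(1,2) _ shell]) simp
    then show ?case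
      using vball_pos[of d] by (simp add: field_simps)
  qed
  then show "\<forall>\<^sub>F d in sequentially. \<rho> ^ d / 2 \<le> measure (Rsp d) (Bset d (x d) r a b) / vball d"
    using \<delta> by (intro eventually_half_power_le[where \<rho>' = "sqrt (\<rho>\<^sup>2 - \<delta>\<^sup>2)"])
      (auto simp: real_sqrt_less_iff power_strict_mono intro!: real_less_lsqrt)
qed

end
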